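(* Assume the setting of the context (in particular $\mathcal{R}(\bar{\mathbf{Y}}_{II})\succ\mathbf{0}$). Let $Y_0>0$, let $\mathbf{B}_I\in\mathbb{R}^{N_I\times N_I}$ be symmetric, and set $\mathbf{Y}_I=\mathrm{i}\mathbf{B}_I$. Define $$\mathbf{H}=\left(\mathbf{Y}_R+\mathbf{Y}_{RR}\right)^{-1}\Big(-\mathbf{Y}_{RT}+\mathbf{Y}_{RI}\big(\mathbf{Y}_I+\bar{\mathbf{Y}}_{II}\big)^{-1}\big(\mathbf{Y}_{IT}-\mathbf{Y}_{IR}(\mathbf{Y}_R+\mathbf{Y}_{RR})^{-1}\mathbf{Y}_{RT}\big)\Big).$$ (All inverses here exist.) Define $$\bar{\mathbf{B}}_I=Y_0\,\mathcal{R}(\bar{\mathbf{Y}}_{II})^{-1/2}\big(\mathbf{B}_I+\mathcal{I}(\bar{\mathbf{Y}}_{II})\big)\mathcal{R}(\bar{\mathbf{Y}}_{II})^{-1/2},\qquad \bar{\boldsymbol{\Theta}}=(Y_0\mathbf{I}+\mathrm{i}\bar{\mathbf{B}}_I)^{-1}(Y_0\mathbf{I}-\mathrm{i}\bar{\mathbf{B}}_I),$$ $$\bar{\mathbf{Y}}_{RT}=2Y_0(\mathbf{Y}_R+\mathbf{Y}_{RR})^{-1}\mathbf{Y}_{RT},\quad \bar{\mathbf{Y}}_{RI}=\sqrt2\,Y_0(\mathbf{Y}_R+\mathbf{Y}_{RR})^{-1}\mathbf{Y}_{RI}\mathcal{R}(\bar{\mathbf{Y}}_{II})^{-1/2},$$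 $$\bar{\mathbf{Y}}_{IT}=\sqrt2\,Y_0\,\mathcal{R}(\bar{\mathbf{Y}}_{II})^{-1/2}\big(\mathbf{Y}_{IT}-\mathbf{Y}_{IR}(\mathbf{Y}_R+\mathbf{Y}_{RR})^{-1}\mathbf{Y}_{RT}\big),$$ $$\bar{\mathbf{H}}_{RT}=-\tfrac{1}{2Y_0}\Big(\bar{\mathbf{Y}}_{RT}-\tfrac{1}{2Y_0}\bar{\mathbf{Y}}_{RI}\bar{\mathbf{Y}}_{IT}\Big),\quad \bar{\mathbf{H}}_{RI}=-\tfrac{1}{2Y_0}\bar{\mathbf{Y}}_{RI},\quad \bar{\mathbf{H}}_{IT}=-\tfrac{1}{2Y_0}\bar{\mathbf{Y}}_{IT}.$$ Then $\mathbf{H}=\bar{\mathbf{H}}_{RT}+\bar{\mathbf{H}}_{RI}\bar{\boldsymbol{\Theta}}\bar{\mathbf{H}}_{IT}$.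
   Context: Setting: $N_T,N_I,N_R$ positive integers, $N=N_T+N_I+N_R$; $\mathbf{Y}\in\mathbb{C}^{N\times N}$ complex symmetric with $\mathcal{R}(\mathbf{Y})$ positive definite, partitioned into blocks $\mathbf{Y}_{ab}\in\mathbb{C}^{N_a\times N_b}$, $a,b\in\{T,I,R\}$; $\mathbf{Y}_R\in\mathbb{R}^{N_R\times N_R}$ diagonal with positive diagonal entries; $\bar{\mathbf{Y}}_{II}:=\mathbf{Y}_{II}-\mathbf{Y}_{IR}(\mathbf{Y}_{RR}+\mathbf{Y}_R)^{-1}\mathbf{Y}_{RI}$. $\mathcal{R}(\cdot),\mathcal{I}(\cdot)$ denote entrywise real and imaginary parts; for a real symmetric positive definite $\mathbf{P}$, $\mathbf{P}^{-1/2}$ is the inverse of its unique positive definite square root. $\mathsf{i}$ is the imaginary unit. *)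

theory Defs
  imports "HOL-Analysis.Analysis"
begin

definition blk :: "('i \<Rightarrow> 'n) \<Rightarrow> ('j \<Rightarrow> 'n) \<Rightarrow> 'a^'n^'n \<Rightarrow> 'a^'j^'i" where
  "blk f g Y = (\<chi> a b. Y $ (f a) $ (g b))"

text \<open>Index embeddings for N = N_T + N_I + N_R.\<close>
definition idxT :: "'t \<Rightarrow> ('t + 'i) + 'r" where "idxT = Inl \<circ> Inl"
definition idxI :: "'i \<Rightarrow> ('t + 'i) + 'r" where "idxI = Inl \<circ> Inr"
definition idxR :: "'r \<Rightarrow> ('t + 'i) + 'r" where "idxR = Inr"

definition cRe :: "complex^'n^'m \<Rightarrow> real^'n^'m" where
  "cRe M = (\<chi> i j. Re (M $ i $ j))"
definition cIm :: "complex^'n^'m \<Rightarrow> real^'n^'m" where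
  "cIm M = (\<chi> i j. Im (M $ i $ j))"
definition cmat :: "real^'n^'m \<Rightarrow> complex^'n^'m" where
  "cmat M = (\<chi> i j. complex_of_real (M $ i $ j))"
definition csc :: "complex \<Rightarrow> complex^'n^'m \<Rightarrow> complex^'n^'m" where
  "csc c M = (\<chi> i j. c * M $ i $ j)"

definition rpd :: "real^'n^'n \<Rightarrow> bool" where
  "rpd P \<longleftrightarrow> transpose P = P \<and> (\<forall>x::real^'n. x \<noteq> 0 \<longrightarrow> x \<bullet> (P *v x) > 0)"

definition msqrt :: "real^'n^'n \<Rightarrow> real^'n^'n" where
  "msqrt P = (THE S. rpd S \<and> S ** S = P)"
definition inv_sqrt :: "real^'n^'n \<Rightarrow> real^'n^'n" where
  "inv_sqrt P = matrix_inv (msqrt P)"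

end

theory Submission
  imports Defs
begin

(* Put M = Y_I + Ybar_II = R + iK, where R is the real part of Ybar_II (positive definite) and
   K = B_I + Im Ybar_II is real symmetric, and let S = R^(-1/2).  Since S R S = 1, the matrix
   Y0 + i Bbar_I equals Y0 S M S, so the Cayley transform Thetabar = (Y0 S M S)^-1 (2 Y0 - Y0 S M S)
   satisfies S Thetabar S = 2 M^-1 - S^2.  Substituted into Hbar_RI Thetabar Hbar_IT this produces
   the M^-1 term of H, while the S^2 term cancels the correction term of Hbar_RT.

   The inverses exist because a complex symmetric matrix X with positive definite real part is
   invertible: Xz = 0 with z = x + iy gives 0 = Re (z^* X z) = x' (Re X) x + y' (Re X) y.  The square
   root R^(1/2) exists and is unique by the spectral theorem, which is proved by maximising the
   quadratic form over the unit sphere of an invariant subspace. *)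

lemma matrix_add_rdistrib: "((B::'a::semiring_1^'n^'m) + C) ** A = B ** A + C ** A"
  by (simp add: matrix_matrix_mult_def vec_eq_iff sum.distrib distrib_right)

lemma matrix_diff_ldistrib: "(A::'a::ring_1^'n^'m) ** (B - C) = A ** B - A ** C"
  by (simp add: matrix_matrix_mult_def vec_eq_iff sum_subtractf right_diff_distrib)

lemma matrix_diff_rdistrib: "((B::'a::ring_1^'n^'m) - C) ** A = B ** A - C ** A"
  by (simp add: matrix_matrix_mult_def vec_eq_iff sum_subtractf left_diff_distrib)

lemmas matrix_scaleR_simps = scalar_matrix_assoc[symmetric] matrix_scalar_ac

lemma transpose_add: "transpose (A + B) = transpose A + transpose B"
  by (simp add: transpose_def vec_eq_iff)

lemma transpose_diff: "transpose (A - B) = transpose A - (transpose B :: 'a::ab_group_add^'n^'m)"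
  by (simp add: transpose_def vec_eq_iff)

lemma matrix_inv_left_right:
  fixes A :: "'a::field^'n^'n"
  assumes "invertible A"
  shows "A ** matrix_inv A = mat 1" "matrix_inv A ** A = mat 1"
  using someI_ex[OF assms[unfolded invertible_def]] by (auto simp: matrix_inv_def)

lemma matrix_inv_unique:
  fixes A B :: "'a::field^'n^'n"
  assumes "A ** B = mat 1"
  shows "matrix_inv A = B"
proof -
  have "invertible A" using assms invertible_right_inverse by blast
  then have "matrix_inv A = matrix_inv A ** (A ** B)"
    by (simp add: assms)
  also have "\<dots> = B"
    by (simp add: matrix_mul_assoc matrix_inv_left_right(2)[OF \<open>invertible A\<close>])
  finally show ?thesis .
qed

lemma transpose_matrix_inv_symmetric:
  fixes X :: "'a::field^'n^'n"
  assumes "invertible X" "transpose X = X"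
  shows "transpose (matrix_inv X) = matrix_inv X"
proof -
  have "transpose (matrix_inv X) ** X = mat 1"
    using arg_cong[OF matrix_inv_left_right(1)[OF assms(1)], of transpose]
    by (simp add: matrix_transpose_mul assms(2))
  then have "X ** transpose (matrix_inv X) = mat 1" using matrix_left_right_inverse by blast
  then have "matrix_inv X = transpose (matrix_inv X)" by (rule matrix_inv_unique)
  then show ?thesis by simp
qed

lemma matrix_eq_on_spanning_set:
  fixes A C :: "real^'n^'m"
  assumes "span B = UNIV" "\<forall>b\<in>B. A *v b = C *v b"
  shows "A = C"
  unfolding matrix_eq
  using linear_eq_on_span[OF matrix_vector_mul_linear matrix_vector_mul_linear] assms by blast

section \<open>Spectral theorem for real symmetric matrices\<close>

lemma symmetric_matrix_inner:
  fixes P :: "real^'n^'n"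
  assumes "transpose P = P"
  shows "(P *v x) \<bullet> y = x \<bullet> (P *v y)"
  by (metis assms dot_lmul_matrix vector_transpose_matrix)

lemma nonpos_if_le_all_positive_multiples:
  fixes c d :: real
  assumes "\<And>t. t > 0 \<Longrightarrow> c \<le> t * d"
  shows "c \<le> 0"
proof (rule ccontr)
  assume c: "\<not> c \<le> 0"
  define t where "t = 1 / (2 * (\<bar>d\<bar> + 1))"
  have "t > 0" "t * d < 1" by (auto simp: t_def field_simps)
  then have "c \<le> c * (t * d)" "c * (t * d) < c"
    using assms[of "c * t"] mult_strict_left_mono[of "t * d" 1 c] c by (auto simp: ac_simps)
  then show False by simp
qed

lemma symmetric_maximizer_is_eigenvector:
  fixes P :: "real^'n^'n"
  assumes sym: "transpose P = P" and V: "subspace V" and inv: "\<forall>x\<in>V. P *v x \<in> V"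
    and v: "v \<in> V" "v \<bullet> v = 1"
    and max: "\<forall>x\<in>V. x \<bullet> (P *v x) \<le> (v \<bullet> (P *v v)) * (x \<bullet> x)"
  shows "P *v v = (v \<bullet> (P *v v)) *\<^sub>R v"
proof -
  define l where "l = v \<bullet> (P *v v)"
  define w where "w = P *v v - l *\<^sub>R v"
  have w: "w \<in> V" unfolding w_def using inv v V by (simp add: subspace_diff subspace_scale)
  have wPv: "w \<bullet> (P *v v) = w \<bullet> w + l * (v \<bullet> w)"
    unfolding w_def by (simp add: algebra_simps inner_commute)
  \<comment> \<open>maximality of \<open>v\<close> tested along \<open>v + t w\<close>, to first order in \<open>t\<close>\<close>
  have "2 * (w \<bullet> w) \<le> t * (l * (w \<bullet> w) - w \<bullet> (P *v w))" if "t > 0" for t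
  proof -
    have "v + t *\<^sub>R w \<in> V" using v w V by (simp add: subspace_add subspace_scale)
    with max have le: "(v + t *\<^sub>R w) \<bullet> (P *v (v + t *\<^sub>R w))
        \<le> l * ((v + t *\<^sub>R w) \<bullet> (v + t *\<^sub>R w))"
      by (simp add: l_def)
    have "(v + t *\<^sub>R w) \<bullet> (P *v (v + t *\<^sub>R w))
        = l + 2 * t * (w \<bullet> (P *v v)) + t\<^sup>2 * (w \<bullet> (P *v w))"
      using symmetric_matrix_inner[OF sym, of w v]
      by (simp add: matrix_vector_right_distrib matrix_vector_mult_scaleR inner_add_left
          inner_add_right inner_commute power2_eq_square distrib_left l_def)
    moreover have "(v + t *\<^sub>R w) \<bullet> (v + t *\<^sub>R w) = 1 + 2 * t * (v \<bullet> w) + t\<^sup>2 * (w \<bullet> w)"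
      using v(2) by (simp add: inner_add_left inner_add_right inner_commute power2_eq_square)
    ultimately have "l + 2 * t * (w \<bullet> (P *v v)) + t\<^sup>2 * (w \<bullet> (P *v w))
        \<le> l * (1 + 2 * t * (v \<bullet> w) + t\<^sup>2 * (w \<bullet> w))"
      using le by simp
    then have "t * (2 * (w \<bullet> w)) \<le> t * (t * (l * (w \<bullet> w) - w \<bullet> (P *v w)))"
      unfolding wPv by (simp add: power2_eq_square algebra_simps)
    with that show ?thesis by simp
  qed
  then have "2 * (w \<bullet> w) \<le> 0" by (rule nonpos_if_le_all_positive_multiples)
  then have "w = 0" using inner_ge_zero[of w] by simp
  then show ?thesis unfolding w_def l_def by (simp add: right_minus_eq)
qed

lemma symmetric_invariant_subspace_eigenvector:
  fixes P :: "real^'n^'n"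
  assumes sym: "transpose P = P" and V: "subspace V" "V \<noteq> {0}" and inv: "\<forall>x\<in>V. P *v x \<in> V"
  obtains v where "v \<in> V" "norm v = 1" "P *v v = (v \<bullet> (P *v v)) *\<^sub>R v"
proof -
  define K where "K = V \<inter> sphere 0 1"
  have "compact K" unfolding K_def using closed_subspace[OF V(1)] compact_sphere by blast
  obtain x0 where "x0 \<in> V" "x0 \<noteq> 0" using V subspace_0 by blast
  then have "x0 /\<^sub>R norm x0 \<in> K" unfolding K_def using V(1) by (simp add: subspace_scale)
  then have "K \<noteq> {}" by blast
  have "continuous_on K (\<lambda>x. x \<bullet> (P *v x))"
    by (intro continuous_intros linear_continuous_on matrix_vector_mult_linear_continuous_on)
  then obtain v where vK: "v \<in> K" and vmax: "\<forall>y\<in>K. y \<bullet> (P *v y) \<le> v \<bullet> (P *v v)"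
    using continuous_attains_sup[OF \<open>compact K\<close> \<open>K \<noteq> {}\<close>] by blast
  have v: "v \<in> V" "norm v = 1" using vK by (auto simp: K_def)
  have "x \<bullet> (P *v x) \<le> (v \<bullet> (P *v v)) * (x \<bullet> x)" if "x \<in> V" "x \<noteq> 0" for x
  proof -
    have "x /\<^sub>R norm x \<in> K" unfolding K_def using that V(1) by (simp add: subspace_scale)
    with vmax have "(x /\<^sub>R norm x) \<bullet> (P *v (x /\<^sub>R norm x)) \<le> v \<bullet> (P *v v)" by blast
    then have "(x \<bullet> (P *v x)) / (norm x)\<^sup>2 \<le> v \<bullet> (P *v v)"
      by (simp add: matrix_vector_mult_scaleR power2_eq_square divide_inverse mult_ac)
    with that show ?thesis by (simp add: field_simps dot_square_norm)
  qed
  then have "\<forall>x\<in>V. x \<bullet> (P *v x) \<le> (v \<bullet> (P *v v)) * (x \<bullet> x)" by fastforce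
  with v have "P *v v = (v \<bullet> (P *v v)) *\<^sub>R v"
    by (intro symmetric_maximizer_is_eigenvector[OF sym V(1) inv]) (simp_all add: dot_square_norm)
  with v that show thesis by blast
qed

lemma span_insert_unit_orthogonal_complement:
  fixes v :: "'a::real_inner"
  assumes V: "subspace V" and v: "v \<in> V" "norm v = 1" and B: "span B = {x \<in> V. v \<bullet> x = 0}"
  shows "span (insert v B) = V"
proof
  have "B \<subseteq> V" using B span_superset by blast
  with V v show "span (insert v B) \<subseteq> V" by (simp add: span_minimal)
  show "V \<subseteq> span (insert v B)"
  proof
    fix x assume "x \<in> V"
    have "x - (v \<bullet> x) *\<^sub>R v \<in> span B"
      using \<open>x \<in> V\<close> v V B by (simp add: subspace_diff subspace_scale inner_diff_right dot_square_norm)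
    then have "x - (v \<bullet> x) *\<^sub>R v \<in> span (insert v B)"
      using span_mono[of B "insert v B"] by blast
    moreover have "(v \<bullet> x) *\<^sub>R v \<in> span (insert v B)"
      by (simp add: span_base span_scale)
    ultimately have "x - (v \<bullet> x) *\<^sub>R v + (v \<bullet> x) *\<^sub>R v \<in> span (insert v B)"
      by (rule span_add)
    then show "x \<in> span (insert v B)" by simp
  qed
qed

lemma symmetric_invariant_subspace_orthonormal_eigenbasis:
  fixes P :: "real^'n^'n"
  assumes sym: "transpose P = P"
  shows "subspace V \<Longrightarrow> \<forall>x\<in>V. P *v x \<in> V \<Longrightarrow>
    \<exists>B. B \<subseteq> V \<and> pairwise orthogonal B \<and> (\<forall>b\<in>B. norm b = 1) \<and>
        (\<forall>b\<in>B. P *v b = (b \<bullet> (P *v b)) *\<^sub>R b) \<and> span B = V"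
proof (induction "dim V" arbitrary: V rule: less_induct)
  case less
  note V = less.prems(1) and inv = less.prems(2)
  show ?case
  proof (cases "V = {0}")
    case True
    then show ?thesis by (intro exI[of _ "{}"]) auto
  next
    case False
    then obtain v where v: "v \<in> V" "norm v = 1" "P *v v = (v \<bullet> (P *v v)) *\<^sub>R v"
      using symmetric_invariant_subspace_eigenvector[OF sym V _ inv] by blast
    define W where "W = {x \<in> V. v \<bullet> x = 0}"
    have W: "subspace W"
      using V unfolding W_def subspace_def by (auto simp: inner_add_right)
    have invW: "\<forall>x\<in>W. P *v x \<in> W"
    proof
      fix x assume "x \<in> W"
      have "v \<bullet> (P *v x) = (v \<bullet> (P *v v)) * (v \<bullet> x)"
        by (metis v(3) symmetric_matrix_inner[OF sym] inner_scaleR_left)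
      with \<open>x \<in> W\<close> inv show "P *v x \<in> W" by (simp add: W_def)
    qed
    have "v \<notin> W" using v(2) by (auto simp: W_def dot_square_norm)
    moreover have "W \<subseteq> V" by (auto simp: W_def)
    ultimately have "W \<subset> V" using v(1) by blast
    then have "dim W < dim V" using dim_psubset V W by (metis span_eq_iff)
    then obtain B where B: "B \<subseteq> W" "pairwise orthogonal B" "\<forall>b\<in>B. norm b = 1"
       "\<forall>b\<in>B. P *v b = (b \<bullet> (P *v b)) *\<^sub>R b" "span B = W"
      using less.hyps W invW by blast
    have "span (insert v B) = V"
      using span_insert_unit_orthogonal_complement[OF V v(1,2)] B(5) by (simp add: W_def)
    moreover have "insert v B \<subseteq> V" using B(1) v(1) by (auto simp: W_def)
    moreover have "pairwise orthogonal (insert v B)"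
      using B(1,2) by (auto simp: pairwise_insert W_def orthogonal_def inner_commute)
    ultimately show ?thesis
      using B v by (intro exI[of _ "insert v B"]) auto
  qed
qed

lemma symmetric_orthonormal_eigenbasis:
  fixes P :: "real^'n^'n"
  assumes "transpose P = P"
  obtains B where "finite B" "pairwise orthogonal B" "\<forall>b\<in>B. norm b = 1"
    "\<forall>b\<in>B. P *v b = (b \<bullet> (P *v b)) *\<^sub>R b" "span B = UNIV"
proof -
  obtain B where B: "pairwise orthogonal B" "\<forall>b\<in>B. norm b = 1"
     "\<forall>b\<in>B. P *v b = (b \<bullet> (P *v b)) *\<^sub>R b" "span B = UNIV"
    using symmetric_invariant_subspace_orthonormal_eigenbasis[OF assms, of UNIV] by auto
  moreover have "finite B"
    using B(1,2) pairwise_orthogonal_independent independent_imp_finite by force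
  ultimately show thesis using that by blast
qed

lemma orthonormal_inner:
  assumes "pairwise orthogonal B" "\<forall>b\<in>B. norm b = 1" "b \<in> B" "c \<in> B"
  shows "b \<bullet> c = (if b = c then 1 else 0)"
  using assms by (auto simp: pairwise_def orthogonal_def dot_square_norm)

lemma symmetric_matrix_from_eigenpairs:
  fixes B :: "(real^'n) set" and f :: "real^'n \<Rightarrow> real"
  assumes B: "finite B" "pairwise orthogonal B" "\<forall>b\<in>B. norm b = 1"
  obtains S :: "real^'n^'n" where "transpose S = S" "\<forall>b\<in>B. S *v b = f b *\<^sub>R b"
    "\<forall>x. x \<bullet> (S *v x) = (\<Sum>b\<in>B. f b * (b \<bullet> x)\<^sup>2)"
proof
  define S :: "real^'n^'n" where "S = (\<chi> i j. \<Sum>b\<in>B. f b * b $ i * b $ j)"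
  have S_apply: "S *v x = (\<Sum>b\<in>B. (f b * (b \<bullet> x)) *\<^sub>R b)" for x
    unfolding S_def matrix_vector_mult_def vec_eq_iff
    by (simp add: inner_vec_def sum_distrib_left sum_distrib_right sum_component mult_ac
        flip: sum.swap[of _ B])
  show "transpose S = S"
    by (simp add: S_def transpose_def vec_eq_iff mult_ac)
  show "\<forall>b\<in>B. S *v b = f b *\<^sub>R b"
  proof
    fix b assume "b \<in> B"
    then have "S *v b = (\<Sum>c\<in>B. if c = b then f c *\<^sub>R c else 0)"
      unfolding S_apply by (intro sum.cong) (use orthonormal_inner[OF B(2,3)] in auto)
    then show "S *v b = f b *\<^sub>R b" using B(1) \<open>b \<in> B\<close> by simp
  qed
  show "\<forall>x. x \<bullet> (S *v x) = (\<Sum>b\<in>B. f b * (b \<bullet> x)\<^sup>2)"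
  proof
    fix x
    show "x \<bullet> (S *v x) = (\<Sum>b\<in>B. f b * (b \<bullet> x)\<^sup>2)"
      by (simp add: S_apply inner_sum_right power2_eq_square mult.assoc inner_commute[of x])
  qed
qed

section \<open>Positive definite matrices and their square roots\<close>

lemma rpd_nonneg: "rpd P \<Longrightarrow> 0 \<le> x \<bullet> (P *v x)"
  by (cases "x = 0") (auto simp: rpd_def less_imp_le)

lemma rpd_add: "rpd P \<Longrightarrow> rpd Q \<Longrightarrow> rpd (P + Q)"
  by (simp add: rpd_def transpose_def vec_eq_iff matrix_vector_mult_add_rdistrib inner_add_right
      add_pos_pos)

lemma rpd_diagonal:
  fixes D :: "real^'n^'n"
  assumes "\<forall>i j. i \<noteq> j \<longrightarrow> D $ i $ j = 0" and "\<forall>i. D $ i $ i > 0"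
  shows "rpd D"
  unfolding rpd_def
proof (intro conjI allI impI)
  show "transpose D = D"
    using assms(1) by (simp add: transpose_def vec_eq_iff) metis
  fix x :: "real^'n" assume "x \<noteq> 0"
  then obtain k where "x $ k \<noteq> 0" by (auto simp: vec_eq_iff)
  have "(D *v x) $ i = D $ i $ i * x $ i" for i
    unfolding matrix_vector_mult_def using assms(1) by (simp add: sum.remove[of UNIV i] sum.neutral)
  then have "x \<bullet> (D *v x) = (\<Sum>i\<in>UNIV. D $ i $ i * (x $ i)\<^sup>2)"
    by (simp add: inner_vec_def power2_eq_square mult_ac)
  also have "\<dots> > 0"
    using assms(2) \<open>x $ k \<noteq> 0\<close> by (intro sum_pos2[of UNIV k]) (auto simp: less_imp_le)
  finally show "x \<bullet> (D *v x) > 0" .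
qed

lemma transpose_blk: "transpose (blk f g Y) = blk g f (transpose Y)"
  by (simp add: blk_def transpose_def)

lemma rpd_principal_submatrix:
  fixes Z :: "real^'n^'n" and f :: "'m::finite \<Rightarrow> 'n"
  assumes Z: "rpd Z" and "inj f"
  shows "rpd (blk f f Z)"
  unfolding rpd_def
proof (intro conjI allI impI)
  show "transpose (blk f f Z) = blk f f Z"
    using Z by (simp add: transpose_blk rpd_def)
  fix x :: "real^'m" assume "x \<noteq> 0"
  define y :: "real^'n" where "y = (\<Sum>i\<in>UNIV. x $ i *\<^sub>R axis (f i) 1)"
  have "y $ f i = x $ i" for i
    using \<open>inj f\<close> by (simp add: y_def axis_def inj_eq if_distrib[of "(*) _"] cong: if_cong)
  with \<open>x \<noteq> 0\<close> have "y \<noteq> 0" by (metis vec_eq_iff zero_index)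
  with Z have "y \<bullet> (Z *v y) > 0" by (simp add: rpd_def)
  also have "y \<bullet> (Z *v y) = (\<Sum>i\<in>UNIV. \<Sum>j\<in>UNIV. x $ i * x $ j * Z $ f i $ f j)"
    by (simp add: y_def inner_sum_left inner_sum_right linear_sum[OF matrix_vector_mul_linear]
        matrix_vector_mult_scaleR inner_axis' matrix_vector_mult_basis column_def sum_distrib_left)
       (subst sum.swap, simp add: mult_ac)
  also have "\<dots> = x \<bullet> (blk f f Z *v x)"
    by (simp add: blk_def inner_vec_def matrix_vector_mult_def sum_distrib_left mult_ac)
  finally show "x \<bullet> (blk f f Z *v x) > 0" .
qed

lemma rpd_invertible:
  assumes "rpd P"
  shows "invertible P"
proof -
  have "x = 0" if "P *v x = 0" for x
    using assms that unfolding rpd_def by (metis inner_zero_right less_irrefl)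
  then show ?thesis using matrix_left_invertible_ker invertible_left_inverse by blast
qed

lemma rpd_sqrt_exists:
  fixes P :: "real^'n^'n"
  assumes P: "rpd P"
  shows "\<exists>S. rpd S \<and> S ** S = P"
proof -
  obtain B where B: "finite B" "pairwise orthogonal B" "\<forall>b\<in>B. norm b = 1"
     "\<forall>b\<in>B. P *v b = (b \<bullet> (P *v b)) *\<^sub>R b" "span B = UNIV"
    using symmetric_orthonormal_eigenbasis P unfolding rpd_def by metis
  define e where "e b = b \<bullet> (P *v b)" for b
  have e_pos: "e b > 0" if "b \<in> B" for b
    using P B(3) that unfolding rpd_def e_def by (metis norm_zero zero_neq_one)
  obtain S where S: "transpose S = S" "\<forall>b\<in>B. S *v b = sqrt (e b) *\<^sub>R b"
    "\<forall>x. x \<bullet> (S *v x) = (\<Sum>b\<in>B. sqrt (e b) * (b \<bullet> x)\<^sup>2)"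
    using symmetric_matrix_from_eigenpairs[OF B(1-3), of "\<lambda>b. sqrt (e b)"] by blast
  have "S ** S = P"
  proof (rule matrix_eq_on_spanning_set[OF B(5)], intro ballI)
    fix b assume b: "b \<in> B"
    have "(S ** S) *v b = sqrt (e b) *\<^sub>R sqrt (e b) *\<^sub>R b"
      using S(2) b by (simp add: matrix_vector_mult_scaleR flip: matrix_vector_mul_assoc)
    also have "\<dots> = e b *\<^sub>R b"
      using e_pos[OF b] by simp
    also have "\<dots> = P *v b"
      using B(4) b unfolding e_def by metis
    finally show "(S ** S) *v b = P *v b" .
  qed
  moreover have "x \<bullet> (S *v x) > 0" if "x \<noteq> 0" for x
  proof -
    have "(\<Sum>b\<in>B. (x \<bullet> b) *\<^sub>R b) = x"
      using B by (intro orthonormal_basis_expand) auto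
    with \<open>x \<noteq> 0\<close> obtain b where b: "b \<in> B" "b \<bullet> x \<noteq> 0"
      by (metis (no_types, lifting) inner_commute scale_eq_0_iff sum.neutral)
    have "(\<Sum>c\<in>B. sqrt (e c) * (c \<bullet> x)\<^sup>2) > 0"
      using b e_pos by (intro sum_pos2[OF B(1) b(1)]) (auto simp: less_imp_le)
    with S(3) show ?thesis by simp
  qed
  ultimately show ?thesis using S(1) unfolding rpd_def by blast
qed

lemma rpd_sqrt_unique:
  fixes S1 S2 :: "real^'n^'n"
  assumes S1: "rpd S1" and S2: "rpd S2" and eq: "S1 ** S1 = S2 ** S2"
  shows "S1 = S2"
proof -
  define D where "D = S1 - S2"
  have D_sym: "transpose D = D"
    using S1 S2 unfolding D_def rpd_def by (simp add: transpose_def vec_eq_iff)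
  obtain B where B: "finite B" "pairwise orthogonal B" "\<forall>b\<in>B. norm b = 1"
     "\<forall>b\<in>B. D *v b = (b \<bullet> (D *v b)) *\<^sub>R b" "span B = UNIV"
    using symmetric_orthonormal_eigenbasis[OF D_sym] by metis
  have "D *v b = 0 *v b" if "b \<in> B" for b
  proof -
    define m where "m = b \<bullet> (D *v b)"
    have Db: "D *v b = m *\<^sub>R b" using B(4) that unfolding m_def by blast
    have "b \<noteq> 0" using B(3) that by force
    then have pos: "b \<bullet> (S1 *v b) > 0" "b \<bullet> (S2 *v b) > 0"
      using S1 S2 by (auto simp: rpd_def)
    \<comment> \<open>\<open>S1 D + D S2 = S1\<^sup>2 - S2\<^sup>2 = 0\<close>, tested against the eigenvector \<open>b\<close> of \<open>D\<close>\<close>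
    have "S1 *v (D *v b) + D *v (S2 *v b) = S1 *v (S1 *v b) - S2 *v (S2 *v b)"
      by (simp add: D_def matrix_vector_mult_diff_rdistrib matrix_vector_mult_diff_distrib)
    also have "\<dots> = 0" by (simp add: matrix_vector_mul_assoc eq)
    finally have "b \<bullet> (S1 *v (D *v b)) + b \<bullet> (D *v (S2 *v b)) = 0"
      by (simp flip: inner_add_right)
    then have "m * (b \<bullet> (S1 *v b) + b \<bullet> (S2 *v b)) = 0"
      using symmetric_matrix_inner[OF D_sym, of b "S2 *v b"]
      by (simp add: Db matrix_vector_mult_scaleR distrib_left)
    with pos have "m = 0" by simp
    with Db show ?thesis by simp
  qed
  then have "D = 0" by (intro matrix_eq_on_spanning_set[OF B(5)]) simp
  then show ?thesis by (simp add: D_def)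
qed

lemma rpd_msqrt:
  assumes "rpd P"
  shows "rpd (msqrt P)" "msqrt P ** msqrt P = P"
proof -
  have "\<exists>!S. rpd S \<and> S ** S = P"
    using rpd_sqrt_exists[OF assms] rpd_sqrt_unique by blast
  then have "rpd (msqrt P) \<and> msqrt P ** msqrt P = P"
    unfolding msqrt_def by (rule theI')
  then show "rpd (msqrt P)" "msqrt P ** msqrt P = P" by auto
qed

lemma inv_sqrt_congruence:
  fixes P :: "real^'n^'n"
  assumes "rpd P"
  shows "invertible (inv_sqrt P)" "inv_sqrt P ** P ** inv_sqrt P = mat 1"
proof -
  have inv: "invertible (msqrt P)" by (rule rpd_invertible[OF rpd_msqrt(1)[OF assms]])
  note left_right = matrix_inv_left_right[OF inv, folded inv_sqrt_def]
  show "invertible (inv_sqrt P)"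
    using left_right unfolding invertible_def by blast
  have "inv_sqrt P ** P ** inv_sqrt P = inv_sqrt P ** (msqrt P ** msqrt P) ** inv_sqrt P"
    by (simp only: rpd_msqrt(2)[OF assms])
  also have "\<dots> = (inv_sqrt P ** msqrt P) ** (msqrt P ** inv_sqrt P)"
    by (simp only: matrix_mul_assoc)
  finally show "inv_sqrt P ** P ** inv_sqrt P = mat 1"
    by (simp add: left_right)
qed

section \<open>Complex matrices with positive definite real part\<close>

lemma cmat_add: "cmat (A + B) = cmat A + cmat B"
  by (simp add: cmat_def vec_eq_iff)

lemma cmat_mult: "cmat (A ** B) = cmat A ** cmat B"
  by (simp add: cmat_def matrix_matrix_mult_def vec_eq_iff)

lemma cmat_mat: "cmat (mat 1) = mat 1"
  by (simp add: cmat_def mat_def vec_eq_iff)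

lemma cmat_scaleR: "cmat (c *\<^sub>R A) = c *\<^sub>R cmat A"
  by (simp add: cmat_def vec_eq_iff) (simp add: scaleR_conv_of_real)

lemma csc_of_real: "csc (complex_of_real r) M = r *\<^sub>R M"
  by (simp add: csc_def vec_eq_iff) (simp add: scaleR_conv_of_real)

lemma csc_add: "csc c (A + B) = csc c A + csc c B"
  by (simp add: csc_def vec_eq_iff distrib_left)

lemma csc_scaleR: "csc a (r *\<^sub>R X) = r *\<^sub>R csc a X"
  by (simp add: csc_def vec_eq_iff)

lemma csc_mult_left: "csc c A ** B = csc c (A ** B)"
  by (simp add: csc_def matrix_matrix_mult_def vec_eq_iff sum_distrib_left mult.assoc)

lemma csc_mult_right: "A ** csc c B = csc c (A ** B)"
  by (simp add: csc_def matrix_matrix_mult_def vec_eq_iff sum_distrib_left mult.left_commute)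

lemma transpose_cmat: "transpose (cmat A) = cmat (transpose A)"
  by (simp add: transpose_def cmat_def)

lemma transpose_csc: "transpose (csc c A) = csc c (transpose A)"
  by (simp add: transpose_def csc_def)

lemma cRe_add: "cRe (A + B) = cRe A + cRe B"
  by (simp add: cRe_def vec_eq_iff)

lemma cRe_cmat: "cRe (cmat A) = A"
  by (simp add: cRe_def cmat_def vec_eq_iff)

lemma cRe_i_cmat: "cRe (csc \<i> (cmat A)) = 0"
  by (simp add: cRe_def csc_def cmat_def vec_eq_iff)

lemma cRe_blk: "cRe (blk f g Y) = blk f g (cRe Y)"
  by (simp add: blk_def cRe_def)

lemma cmat_cRe_plus_cIm: "X = cmat (cRe X) + csc \<i> (cmat (cIm X))"
  by (simp add: cmat_def cRe_def cIm_def csc_def vec_eq_iff complex_eq_iff)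

lemma complex_symmetric_invertible_if_rpd_Re:
  fixes X :: "complex^'n^'n"
  assumes X_sym: "transpose X = X" and Re_pd: "rpd (cRe X)"
  shows "invertible X"
proof -
  have "z = 0" if Xz: "X *v z = 0" for z
  proof -
    define x :: "real^'n" where "x = (\<chi> j. Re (z $ j))"
    define y :: "real^'n" where "y = (\<chi> j. Im (z $ j))"
    define P where "P = cRe X"
    have X_ij: "X $ j $ i = X $ i $ j" for i j
      using X_sym by (metis transpose_def vec_lambda_beta)
    \<comment> \<open>the imaginary part of \<open>X\<close> contributes an antisymmetric form, which vanishes\<close>
    have "(\<Sum>i\<in>UNIV. \<Sum>j\<in>UNIV. Im (X $ i $ j) * (y $ i * x $ j))
        = (\<Sum>i\<in>UNIV. \<Sum>j\<in>UNIV. Im (X $ i $ j) * (x $ i * y $ j))"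
      by (subst sum.swap) (simp add: X_ij mult_ac)
    then have antisym: "(\<Sum>i\<in>UNIV. \<Sum>j\<in>UNIV. Im (X $ i $ j) * (x $ i * y $ j - y $ i * x $ j)) = 0"
      by (simp add: right_diff_distrib sum_subtractf)
    have "0 = Re (\<Sum>i\<in>UNIV. cnj (z $ i) * (X *v z) $ i)"
      by (simp add: Xz)
    also have "\<dots> = (\<Sum>i\<in>UNIV. \<Sum>j\<in>UNIV. P $ i $ j * (x $ i * x $ j) + P $ i $ j * (y $ i * y $ j)
        - Im (X $ i $ j) * (x $ i * y $ j - y $ i * x $ j))"
      by (simp add: matrix_vector_mult_def sum_distrib_left Re_sum x_def y_def P_def cRe_def
          algebra_simps)
    also have "\<dots> = x \<bullet> (P *v x) + y \<bullet> (P *v y)"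
      using antisym by (simp add: sum.distrib sum_subtractf inner_vec_def matrix_vector_mult_def
          sum_distrib_left mult_ac)
    finally have "x \<bullet> (P *v x) + y \<bullet> (P *v y) = 0" by simp
    with rpd_nonneg[OF Re_pd, of x] rpd_nonneg[OF Re_pd, of y] Re_pd
    have "x = 0" "y = 0" unfolding P_def rpd_def by (metis add_nonneg_eq_0_iff less_irrefl)+
    then show "z = 0" by (simp add: x_def y_def vec_eq_iff complex_eq_iff)
  qed
  then show ?thesis using matrix_left_invertible_ker invertible_left_inverse by blast
qed

lemma invertible_cmat_plus_principal_block:
  fixes Y :: "complex^'n^'n" and D :: "real^'m^'m" and f :: "'m \<Rightarrow> 'n"
  assumes Y: "transpose Y = Y" "rpd (cRe Y)" and "inj f" and D: "rpd D"
  shows "invertible (cmat D + blk f f Y)" "transpose (cmat D + blk f f Y) = cmat D + blk f f Y"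
proof -
  show sym: "transpose (cmat D + blk f f Y) = cmat D + blk f f Y"
    using D Y(1) by (simp add: transpose_add transpose_cmat transpose_blk rpd_def)
  have "rpd (cRe (cmat D + blk f f Y))"
    unfolding cRe_add cRe_cmat cRe_blk
    by (intro rpd_add D rpd_principal_submatrix Y(2) \<open>inj f\<close>)
  with sym show "invertible (cmat D + blk f f Y)"
    by (rule complex_symmetric_invertible_if_rpd_Re)
qed

lemma transpose_Schur_complement:
  assumes "transpose Y = Y" "transpose (X :: 'a::comm_ring_1^'m^'m) = X"
  shows "transpose (blk f f Y - blk f g Y ** X ** blk g f Y) = blk f f Y - blk f g Y ** X ** blk g f Y"
  using assms by (simp add: transpose_diff matrix_transpose_mul transpose_blk matrix_mul_assoc)

section \<open>The Cayley transform\<close>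

lemma cayley_transform_congruence:
  fixes R K S :: "real^'n^'n" and c :: real
  defines "M \<equiv> cmat R + csc \<i> (cmat K)" and "B \<equiv> c *\<^sub>R (S ** K ** S)"
  assumes c: "c \<noteq> 0" and S: "invertible S" "S ** R ** S = mat 1" and M: "invertible M"
  shows "cmat S ** (matrix_inv (csc (complex_of_real c) (mat 1) + csc \<i> (cmat B))
           ** (csc (complex_of_real c) (mat 1) - csc \<i> (cmat B))) ** cmat S
         = 2 *\<^sub>R matrix_inv M - cmat S ** cmat S"
proof -
  obtain Si where Si: "S ** Si = mat 1" "Si ** S = mat 1" using S(1) invertible_def by blast
  have cSi: "cmat S ** cmat Si = mat 1" "cmat Si ** cmat S = mat 1"
    by (simp_all add: Si cmat_mat flip: cmat_mult)
  define N where "N = csc (complex_of_real c) (mat 1) + csc \<i> (cmat B)"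
  have N_eq: "N = c *\<^sub>R (cmat S ** M ** cmat S)"
    by (simp add: N_def M_def B_def csc_of_real matrix_add_ldistrib matrix_add_rdistrib
        csc_mult_left csc_mult_right cmat_scaleR csc_scaleR scaleR_add_right S(2) cmat_mat
        flip: cmat_mult)
  define Ni where "Ni = (1 / c) *\<^sub>R (cmat Si ** matrix_inv M ** cmat Si)"
  have "N ** Ni = cmat S ** M ** (cmat S ** cmat Si) ** matrix_inv M ** cmat Si"
    using c by (simp add: N_eq Ni_def matrix_scaleR_simps matrix_mul_assoc)
  also have "\<dots> = mat 1"
    by (simp add: cSi matrix_mul_assoc matrix_inv_left_right(1)[OF M]
        flip: matrix_mul_assoc[of "cmat S"])
  finally have NNi: "N ** Ni = mat 1" .
  have "(2 * c) *\<^sub>R mat 1 - N = csc (complex_of_real c) (mat 1) - csc \<i> (cmat B)"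
    unfolding N_def csc_of_real mult_2 scaleR_add_left by simp
  then have "matrix_inv N ** (csc (complex_of_real c) (mat 1) - csc \<i> (cmat B))
      = matrix_inv N ** ((2 * c) *\<^sub>R mat 1 - N)"
    by simp
  also have "\<dots> = (2 * c) *\<^sub>R Ni - mat 1"
    using NNi matrix_left_right_inverse[of N Ni]
    by (simp add: matrix_inv_unique[OF NNi] matrix_diff_ldistrib matrix_scaleR_simps)
  finally have "cmat S ** (matrix_inv N ** (csc (complex_of_real c) (mat 1) - csc \<i> (cmat B))) ** cmat S
      = 2 *\<^sub>R ((cmat S ** cmat Si) ** matrix_inv M ** (cmat Si ** cmat S)) - cmat S ** cmat S"
    using c by (simp add: Ni_def matrix_diff_ldistrib matrix_diff_rdistrib matrix_scaleR_simps
        matrix_mul_assoc)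
  then show ?thesis by (simp add: cSi N_def)
qed

lemma cayley_scattering_identity:
  fixes V :: "complex^'t^'r" and U :: "complex^'i^'r" and W :: "complex^'t^'i"
    and T Theta Mi :: "complex^'i^'i" and Y0 :: real
  assumes Y0: "Y0 \<noteq> 0" and Theta: "T ** Theta ** T = 2 *\<^sub>R Mi - T ** T"
  shows "- V + U ** Mi ** W
    = csc (complex_of_real (- 1 / (2 * Y0)))
        (csc (complex_of_real (2 * Y0)) V
         - csc (complex_of_real (1 / (2 * Y0)))
             (csc (complex_of_real (sqrt 2 * Y0)) (U ** T) ** csc (complex_of_real (sqrt 2 * Y0)) (T ** W)))
      + csc (complex_of_real (- 1 / (2 * Y0))) (csc (complex_of_real (sqrt 2 * Y0)) (U ** T))
        ** Theta ** csc (complex_of_real (- 1 / (2 * Y0))) (csc (complex_of_real (sqrt 2 * Y0)) (T ** W))"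
proof -
  define a b d e where "a = - 1 / (2 * Y0)" and "b = sqrt 2 * Y0" and "d = 1 / (2 * Y0)"
    and "e = 2 * Y0"
  have scalars: "a * e = - 1" "a * (d * (b * b)) = - 1 / 2" "a * b * (a * b) = 1 / 2"
    using Y0 by (simp_all add: a_def b_def d_def e_def field_simps)
  have "U ** (T ** Theta ** T) ** W = 2 *\<^sub>R (U ** Mi ** W) - U ** T ** T ** W"
    by (simp add: Theta matrix_diff_ldistrib matrix_diff_rdistrib matrix_scaleR_simps matrix_mul_assoc)
  \<comment> \<open>fold \<open>a\<close> and \<open>d\<close> before \<open>e\<close>: the term \<open>2 * Y0\<close> occurs inside them\<close>
  then show ?thesis
    unfolding a_def[symmetric] d_def[symmetric] unfolding e_def[symmetric] b_def[symmetric] csc_of_real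
    by (simp add: matrix_scaleR_simps matrix_mul_assoc scaleR_diff_right scalars)
qed

theorem proposition1:
  fixes Y :: "complex^(('T::finite + 'I::finite) + 'R::finite)^(('T + 'I) + 'R)"
    and YR :: "real^'R^'R"
    and BI :: "real^'I^'I"
    and Y0 :: real
  defines "YTT \<equiv> blk idxT idxT Y" and "YTI \<equiv> blk idxT idxI Y" and "YTR \<equiv> blk idxT idxR Y"
    and "YIT \<equiv> blk idxI idxT Y" and "YII \<equiv> blk idxI idxI Y" and "YIR \<equiv> blk idxI idxR Y"
    and "YRT \<equiv> blk idxR idxT Y" and "YRI \<equiv> blk idxR idxI Y" and "YRR \<equiv> blk idxR idxR Y"
  defines "A \<equiv> matrix_inv (cmat YR + YRR)"
  defines "YbII \<equiv> YII - YIR ** A ** YRI"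
  defines "YI \<equiv> csc \<i> (cmat BI)"
  defines "S \<equiv> inv_sqrt (cRe YbII)"
  defines "H \<equiv> A ** (- YRT + YRI ** matrix_inv (YI + YbII) ** (YIT - YIR ** A ** YRT))"
  defines "BbI \<equiv> Y0 *\<^sub>R (S ** (BI + cIm YbII) ** S)"
  defines "Theta \<equiv> matrix_inv (csc (complex_of_real Y0) (mat 1) + csc \<i> (cmat BbI))
                     ** (csc (complex_of_real Y0) (mat 1) - csc \<i> (cmat BbI))"
  defines "YbRT \<equiv> csc (complex_of_real (2 * Y0)) (A ** YRT)"
  defines "YbRI \<equiv> csc (complex_of_real (sqrt 2 * Y0)) (A ** YRI ** cmat S)"
  defines "YbIT \<equiv> csc (complex_of_real (sqrt 2 * Y0)) (cmat S ** (YIT - YIR ** A ** YRT))"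
  defines "HbRT \<equiv> csc (complex_of_real (- 1 / (2 * Y0)))
                     (YbRT - csc (complex_of_real (1 / (2 * Y0))) (YbRI ** YbIT))"
  defines "HbRI \<equiv> csc (complex_of_real (- 1 / (2 * Y0))) YbRI"
  defines "HbIT \<equiv> csc (complex_of_real (- 1 / (2 * Y0))) YbIT"
  assumes Ysym: "transpose Y = Y"
    and YRe_pd: "rpd (cRe Y)"
    and YR_diag: "\<forall>i j. i \<noteq> j \<longrightarrow> YR $ i $ j = 0"
    and YR_pos: "\<forall>i. YR $ i $ i > 0"
    and YbII_pd: "rpd (cRe YbII)"
    and Y0_pos: "Y0 > 0"
    and BI_sym: "transpose BI = BI"
  shows "invertible (cmat YR + YRR) \<and> invertible (YI + YbII) \<and> H = HbRT + HbRI ** Theta ** HbIT"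
proof -
  have RR_inv: "invertible (cmat YR + YRR)" and RR_sym: "transpose (cmat YR + YRR) = cmat YR + YRR"
    unfolding YRR_def using rpd_diagonal[OF YR_diag YR_pos] Ysym YRe_pd
    by (intro invertible_cmat_plus_principal_block; simp add: inj_def idxR_def)+
  have "transpose A = A"
    unfolding A_def by (rule transpose_matrix_inv_symmetric[OF RR_inv RR_sym])
  then have "transpose YbII = YbII"
    unfolding YbII_def YII_def YIR_def YRI_def by (intro transpose_Schur_complement Ysym)
  then have M_inv: "invertible (YI + YbII)"
    using YbII_pd BI_sym by (intro complex_symmetric_invertible_if_rpd_Re)
      (simp_all add: YI_def transpose_add transpose_csc transpose_cmat cRe_add cRe_i_cmat)
  have M_eq: "YI + YbII = cmat (cRe YbII) + csc \<i> (cmat (BI + cIm YbII))"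
    using cmat_cRe_plus_cIm[of YbII] by (simp add: YI_def cmat_add csc_add)
  have "cmat S ** Theta ** cmat S = 2 *\<^sub>R matrix_inv (YI + YbII) - cmat S ** cmat S"
    unfolding Theta_def BbI_def M_eq S_def
    using Y0_pos inv_sqrt_congruence[OF YbII_pd] M_inv[unfolded M_eq]
    by (intro cayley_transform_congruence) auto
  then have "- (A ** YRT) + (A ** YRI) ** matrix_inv (YI + YbII) ** (YIT - YIR ** A ** YRT)
      = HbRT + HbRI ** Theta ** HbIT"
    unfolding HbRT_def HbRI_def HbIT_def YbRT_def YbRI_def YbIT_def
    using Y0_pos by (intro cayley_scattering_identity) (auto simp: matrix_mul_assoc)
  then have "H = HbRT + HbRI ** Theta ** HbIT"
    by (simp add: H_def matrix_diff_ldistrib matrix_mul_assoc)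
  with RR_inv M_inv show ?thesis by blast
qed

end
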